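(* Let $f(t)=1+\sum_{i=1}^{d}f_{i-1}t^{i}$ be a polynomial with positive integer coefficients $f_0,\dots,f_{d-1}$, all of whose roots are real. Then $(1,f_0,\dots,f_{d-1})$ is the $h$-vector of a Cohen–Macaulay simplicial complex; equivalently, $\kappa_{i+1}(f_i)\le f_{i-1}$ for all $0\le i\le d-1$ (with $f_{-1}=1$).
   Context: Given positive integers $m$ and $i$, $m$ has a unique $i$-th binomial expansion $m=\binom{a_i}{i}+\binom{a_{i-1}}{i-1}+\cdots+\binom{a_j}{j}$ with $a_i>a_{i-1}>\cdots>a_j\ge j\ge1$. Define $\kappa_i(m)=\binom{a_i-1}{i-1}+\binom{a_{i-1}-1}{i-2}+\cdots+\binom{a_j-1}{j-1}$. For a simplicial complex $\Delta$ of dimension $d-1$ with $f$-vector $(f_{-1},\dots,f_{d-1})$ ($f_i$ = number of $i$-dimensional faces, $f_{-1}=1$), the $h$-polynomial $\sum_{i=0}^{d} h_i t^i$ is defined by $\sum h_it^i=(1-t)^{d}\sum_{i=0}^{d}f_{i-1}(t/(1-t))^{i}$, and $(h_0,\dots,h_d)$ is its $h$-vector. By Macaulay's theorem, a vector $(1,f_0,\dots,f_{d-1})$ of positive integers is the $h$-vector of a Cohen–Macaulay simplicial complex iff $\kappa_{i+1}(f_i)\le f_{i-1}$ for $0\le i\le d-1$. *)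

theory Defs
  imports "HOL-Computational_Algebra.Polynomial" Complex_Main
begin

text \<open>A list as = [a_i, a_(i-1), ..., a_j] is the i-th binomial expansion of m, where
  j = i + 1 - length as; the entry at position k corresponds to binomial (as!k choose (i-k)).\<close>
definition is_binom_expansion :: "nat \<Rightarrow> nat \<Rightarrow> nat list \<Rightarrow> bool" where
  "is_binom_expansion i m as \<longleftrightarrow>
     as \<noteq> [] \<and> length as \<le> i \<and>
     sorted_wrt (>) as \<and>
     last as \<ge> i + 1 - length as \<and>
     m = (\<Sum>k<length as. (as ! k) choose (i - k))"

definition kappa :: "nat \<Rightarrow> nat \<Rightarrow> nat" where
  "kappa i m = (let as = (THE as. is_binom_expansion i m as)
                in \<Sum>k<length as. (as ! k - 1) choose (i - k - 1))"

definition fpoly :: "nat \<Rightarrow> (nat \<Rightarrow> nat) \<Rightarrow> real poly" where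
  "fpoly d f = 1 + (\<Sum>i\<in>{1..d}. monom (real (f (i - 1))) i)"

end

theory Submission
  imports Defs "HOL-Computational_Algebra.Fundamental_Theorem_Algebra"
begin

text \<open>
  Write a_0 = 1 and a_k = f_(k-1) for the coefficients of f. A real-rooted polynomial with
  positive coefficients is c (t + r_1) ... (t + r_n) with all r_i > 0, and multiplying by t + r
  preserves the Newton-type inequalities (k + 2) a_k a_(k+2) <= (k + 1) a_(k+1)^2.

  These inequalities imply Macaulay's conditions by induction on k. Let p = a_k and let N be
  its pseudo-power, obtained by replacing every term (b choose j) of the k-th binomial
  expansion of p by (b + 1 choose j + 1). Then kappa_(k+1)(N) = p and
  k p^2 + N <= (k + 1) kappa_k(p) N. As kappa_k(p) <= a_(k-1), the Newton inequality
  (k + 1) a_(k-1) a_(k+1) <= k p^2 forces a_(k+1) <= N, and monotonicity of kappa_(k+1) gives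
  kappa_(k+1)(a_(k+1)) <= p. The inequality for the pseudo-power is proved by induction on the
  length of the expansion; its inductive step is an explicit polynomial certificate.\<close>

section \<open>Binomial expansions as lists\<close>

text \<open>\<open>cascade i [a_i, ..., a_j]\<close> says that the list is an \<open>i\<close>-th binomial expansion (lemma
  \<open>is_binom_expansion_iff\<close>); for such a list, \<open>cascade_val (Suc i) (map Suc as)\<close> is Macaulay's
  pseudo-power of its value.\<close>

fun cascade :: "nat \<Rightarrow> nat list \<Rightarrow> bool" where
  "cascade i [] = True"
| "cascade i (a # as) \<longleftrightarrow> 1 \<le> i \<and> i \<le> a \<and> (\<forall>b\<in>set as. b < a) \<and> cascade (i - 1) as"

fun cascade_val :: "nat \<Rightarrow> nat list \<Rightarrow> nat" where
  "cascade_val i [] = 0"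
| "cascade_val i (a # as) = (a choose i) + cascade_val (i - 1) as"

fun cascade_kappa :: "nat \<Rightarrow> nat list \<Rightarrow> nat" where
  "cascade_kappa i [] = 0"
| "cascade_kappa i (a # as) = ((a - 1) choose (i - 1)) + cascade_kappa (i - 1) as"

lemma sum_choose_eq_cascade_val: "(\<Sum>k<length as. (as ! k) choose (i - k)) = cascade_val i as"
proof (induction as arbitrary: i)
  case (Cons a as)
  then show ?case using Cons.IH[of "i - 1"] by (simp add: sum.lessThan_Suc_shift del: sum.lessThan_Suc)
qed simp

lemma sum_choose_eq_cascade_kappa:
  "(\<Sum>k<length as. (as ! k - 1) choose (i - k - 1)) = cascade_kappa i as"
proof (induction as arbitrary: i)
  case (Cons a as)
  then show ?case using Cons.IH[of "i - 1"] by (simp add: sum.lessThan_Suc_shift del: sum.lessThan_Suc)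
qed simp

lemma cascade_iff:
  "as \<noteq> [] \<Longrightarrow> cascade i as \<longleftrightarrow> length as \<le> i \<and> sorted_wrt (>) as \<and> i + 1 - length as \<le> last as"
proof (induction as arbitrary: i)
  case (Cons a as)
  show ?case
  proof (cases as)
    case (Cons b bs)
    have "cascade (i - 1) as \<longleftrightarrow> length as \<le> i - 1 \<and> sorted_wrt (>) as \<and> i - 1 + 1 - length as \<le> last as"
      using Cons.IH \<open>as = b # bs\<close> by blast
    moreover have "cascade (i - 1) as \<Longrightarrow> i - 1 \<le> b"
      using \<open>as = b # bs\<close> by simp
    ultimately show ?thesis
      using \<open>as = b # bs\<close> by (cases "i = 0") auto
  qed simp
qed simp

lemma is_binom_expansion_iff:
  "is_binom_expansion i m as \<longleftrightarrow> as \<noteq> [] \<and> cascade i as \<and> cascade_val i as = m"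
  unfolding is_binom_expansion_def using cascade_iff sum_choose_eq_cascade_val by metis

lemma cascade_val_Cons_less: "cascade i (a # as) \<Longrightarrow> cascade_val i (a # as) < Suc a choose i"
proof (induction as arbitrary: i a)
  case Nil
  then show ?case by (cases i) auto
next
  case (Cons b bs)
  then obtain i' where i': "i = Suc i'" by (cases i) auto
  have "cascade_val i' (b # bs) < Suc b choose i'"
    using Cons i' by auto
  also have "\<dots> \<le> a choose i'"
    using Cons.prems by (intro binomial_right_mono) auto
  finally show ?case using i' by simp
qed

lemma cascade_val_less_of_head_less:
  assumes "cascade i (a # as)" "cascade i (b # bs)" "a < b"
  shows "cascade_val i (a # as) < cascade_val i (b # bs)"
proof -
  have "cascade_val i (a # as) < Suc a choose i"
    using assms(1) by (rule cascade_val_Cons_less)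
  also have "\<dots> \<le> b choose i"
    using assms(3) by (intro binomial_right_mono) simp
  also have "\<dots> \<le> cascade_val i (b # bs)"
    by simp
  finally show ?thesis .
qed

lemma cascade_val_inj:
  "cascade i as \<Longrightarrow> cascade i bs \<Longrightarrow> cascade_val i as = cascade_val i bs \<Longrightarrow> as = bs"
proof (induction as arbitrary: i bs)
  case Nil
  then show ?case by (cases bs) auto
next
  case (Cons a as)
  then obtain b bs' where bs: "bs = b # bs'"
    by (cases bs) auto
  have "a = b"
    using cascade_val_less_of_head_less[of i a as b bs'] cascade_val_less_of_head_less[of i b bs' a as]
      Cons.prems bs by (cases a b rule: linorder_cases) auto
  then show ?case
    using Cons bs by auto
qed

lemma cascade_exists_less:
  "m < A choose i \<Longrightarrow> \<exists>as. cascade i as \<and> cascade_val i as = m \<and> (\<forall>x\<in>set as. x < A)"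
proof (induction i arbitrary: A m)
  case 0
  then show ?case by (intro exI[of _ "[]"]) simp
next
  case (Suc i)
  show ?case
  proof (cases "m = 0")
    case True
    then show ?thesis by (intro exI[of _ "[]"]) simp
  next
    case False
    define S where "S = {x. x < A \<and> x choose Suc i \<le> m}"
    define a where "a = Max S"
    have "Suc i < A"
    proof (rule ccontr)
      assume "\<not> Suc i < A"
      then have "A choose Suc i \<le> 1"
        by (cases "A = Suc i") (auto simp: binomial_eq_0)
      then show False
        using Suc.prems False by simp
    qed
    then have "Suc i \<in> S"
      using False unfolding S_def by simp
    moreover have "finite S"
      unfolding S_def by simp
    ultimately have "a \<in> S" "Suc i \<le> a" "Suc a \<notin> S"
      unfolding a_def by (auto intro: Max_in Max_ge dest: Max_ge[of S "Suc (Max S)"])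
    then have a: "a < A" "a choose Suc i \<le> m" "Suc i \<le> a" and "Suc a \<notin> S"
      unfolding S_def by auto
    then have "m < Suc a choose Suc i"
      using Suc.prems unfolding S_def by (cases "Suc a = A") auto
    then have "m - (a choose Suc i) < a choose i"
      using a(2) by simp
    then obtain as where "cascade i as" "cascade_val i as = m - (a choose Suc i)" "\<forall>x\<in>set as. x < a"
      using Suc.IH by blast
    then show ?thesis
      using a by (intro exI[of _ "a # as"]) auto
  qed
qed

lemma less_add_choose: "0 < i \<Longrightarrow> m < (m + i) choose i"
proof (induction i rule: nat_induct_non_zero)
  case (Suc i)
  then show ?case by (cases m) auto
qed simp

lemma cascade_exists:
  assumes "0 < i" "0 < m"
  obtains as where "as \<noteq> []" "cascade i as" "cascade_val i as = m"
proof -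
  obtain as where "cascade i as" "cascade_val i as = m"
    using cascade_exists_less[OF less_add_choose[OF assms(1)]] by blast
  moreover have "as \<noteq> []"
    using calculation assms(2) by auto
  ultimately show thesis
    using that by blast
qed

lemma kappa_cascade_val:
  assumes "cascade i as" "as \<noteq> []"
  shows "kappa i (cascade_val i as) = cascade_kappa i as"
proof -
  have "(THE bs. is_binom_expansion i (cascade_val i as) bs) = as"
    using assms cascade_val_inj by (intro the_equality) (auto simp: is_binom_expansion_iff)
  then show ?thesis
    unfolding kappa_def Let_def using sum_choose_eq_cascade_kappa by simp
qed

lemma cascade_kappa_Cons_le: "cascade i (a # as) \<Longrightarrow> cascade_kappa i (a # as) \<le> a choose (i - 1)"
proof (induction as arbitrary: i a)
  case Nil
  then show ?case by (simp add: binomial_right_mono)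
next
  case (Cons b bs)
  then obtain i' a' where i': "i = Suc (Suc i')" and a': "a = Suc a'"
    by (cases i; cases "i - 1"; cases a) auto
  have "cascade_kappa (Suc i') (b # bs) \<le> b choose i'"
    using Cons.IH[of "Suc i'" b] Cons.prems i' by simp
  then have "cascade_kappa i (a # b # bs) \<le> (a' choose Suc i') + (b choose i')"
    using i' a' by simp
  also have "\<dots> \<le> (a' choose Suc i') + (a' choose i')"
    using Cons.prems a' by (intro add_left_mono binomial_right_mono) auto
  also have "\<dots> = a choose (i - 1)"
    using a' i' by simp
  finally show ?case .
qed

lemma cascade_kappa_mono:
  "cascade i as \<Longrightarrow> cascade i bs \<Longrightarrow> cascade_val i as \<le> cascade_val i bs
    \<Longrightarrow> cascade_kappa i as \<le> cascade_kappa i bs"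
proof (induction as arbitrary: i bs)
  case Nil
  then show ?case by simp
next
  case (Cons a as)
  then obtain b bs' where bs: "bs = b # bs'"
    by (cases bs) auto
  consider "a = b" | "b < a" | "a < b"
    by linarith
  then show ?case
  proof cases
    case 1
    then show ?thesis
      using Cons bs by auto
  next
    case 2
    then show ?thesis
      using cascade_val_less_of_head_less[of i b bs' a as] Cons.prems bs by simp
  next
    case 3
    have "cascade_kappa i (a # as) \<le> a choose (i - 1)"
      using Cons.prems(1) by (rule cascade_kappa_Cons_le)
    also have "\<dots> \<le> (b - 1) choose (i - 1)"
      using 3 by (intro binomial_right_mono) simp
    also have "\<dots> \<le> cascade_kappa i bs"
      using bs by simp
    finally show ?thesis .
  qed
qed

lemma kappa_mono:
  assumes "0 < i" "0 < m" "m \<le> m'"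
  shows "kappa i m \<le> kappa i m'"
proof -
  obtain as where as: "as \<noteq> []" "cascade i as" "cascade_val i as = m"
    using cascade_exists assms(1,2) by blast
  obtain bs where bs: "bs \<noteq> []" "cascade i bs" "cascade_val i bs = m'"
    using cascade_exists assms by (metis less_le_trans)
  show ?thesis
    using kappa_cascade_val[OF as(2,1)] kappa_cascade_val[OF bs(2,1)] cascade_kappa_mono[OF as(2) bs(2)]
      as bs assms(3) by simp
qed

lemma kappa_1: "0 < m \<Longrightarrow> kappa 1 m = 1"
  using kappa_cascade_val[of 1 "[m]"] by simp

lemma cascade_map_Suc: "cascade i as \<Longrightarrow> cascade (Suc i) (map Suc as)"
proof (induction as arbitrary: i)
  case (Cons a as)
  then obtain i' where "i = Suc i'"
    by (cases i) auto
  then show ?case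
    using Cons by auto
qed simp

lemma cascade_kappa_map_Suc: "cascade i as \<Longrightarrow> cascade_kappa (Suc i) (map Suc as) = cascade_val i as"
proof (induction as arbitrary: i)
  case (Cons a as)
  then show ?case
    using Cons.IH[of "i - 1"] by simp
qed simp

lemma cascade_val_le_map_Suc: "cascade i as \<Longrightarrow> cascade_val i as \<le> cascade_val (Suc i) (map Suc as)"
proof (induction as arbitrary: i)
  case (Cons a as)
  then show ?case
    using Cons.IH[of "i - 1"] by simp
qed simp

section \<open>Macaulay's conditions from Newton-type inequalities\<close>

lemma quadratic_form_nonneg:
  fixes a b c x y :: real
  assumes "0 \<le> a" "0 \<le> c" "b^2 \<le> 4 * a * c"
  shows "0 \<le> a * x^2 - b * x * y + c * y^2"
proof (cases "a = 0")
  case True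
  then have "b = 0"
    using assms(3) by simp
  then show ?thesis
    using True assms(2) by simp
next
  case False
  have "4 * a * (a * x^2 - b * x * y + c * y^2) = (2 * a * x - b * y)^2 + (4 * a * c - b^2) * y^2"
    by (simp add: algebra_simps power2_eq_square)
  also have "\<dots> \<ge> 0"
    using assms by simp
  finally show ?thesis
    using assms(1) False by (simp add: zero_le_mult_iff)
qed

lemma pseudo_power_certificate:
  fixes K B X a s :: real
  assumes "3 \<le> K" "K \<le> B" "0 \<le> s" "s \<le> a" "(B - K + 1) * s \<le> X"
  shows "2 * K^2 * (K + 1) * B * a * X * s + K * B * (K + 1) * s^2 * a
    \<le> (K + 1) * K * X^2 * a + K^2 * (K + 1)^2 * X * a^2 + (K^2 - 1) * B * (B + 1) * X * s^2
      + B * (B + 1) * X * a + K * B * (K + 1) * a^2"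
proof -
  \<comment> \<open>After the substitution the difference of the two sides is \<open>R + s Q\<^sub>1 + t Q\<^sub>2\<close> with
    \<open>Q\<^sub>i = A\<^sub>i s\<^sup>2 - B\<^sub>i s e + C\<^sub>i e\<^sup>2\<close>, where \<open>R\<close>, \<open>A\<^sub>i\<close>, \<open>C\<^sub>i\<close> are polynomials with nonnegative coefficients
    and so is \<open>4 A\<^sub>i C\<^sub>i - B\<^sub>i\<^sup>2\<close>.\<close>
  obtain u j t e where subst: "K = u + 3" "B = u + 3 + j" "X = (j + 1) * s + t" "a = s + e"
    and nonneg: "0 \<le> u" "0 \<le> j" "0 \<le> t" "0 \<le> e"
    using assms by (intro that[of "K - 3" "B - K" "X - (B - K + 1) * s" "a - s"]) auto
  define R where "R = 36 * e^2 + 12 * t * e + 12 * t^2 * e + 84 * s * e + 12 * s * t + 96 * s * t * e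
      + 12 * s * t^2 + 48 * s^2 + 48 * s^2 * e + 12 * j * e^2 + 7 * j * t * e
      + 43 * j * s * e + 7 * j * s * t + 31 * j * s^2 + 12 * j * s^2 * e + j^2 * t * e
      + 8 * j^2 * s * e + j^2 * s * t + 8 * j^2 * s^2 + j^3 * s * e + j^3 * s^2
      + 33 * u * e^2 + 7 * u * t * e + 7 * u * t^2 * e + 73 * u * s * e
      + 7 * u * s * t + 80 * u * s * t * e + 7 * u * s * t^2 + 40 * u * s^2
      + 40 * u * s^2 * e + 7 * u * j * e^2 + 2 * u * j * t * e + 23 * u * j * s * e
      + 2 * u * j * s * t + 16 * u * j * s^2 + 7 * u * j * s^2 * e
      + 2 * u * j^2 * s * e + 2 * u * j^2 * s^2 + 10 * u^2 * e^2 + u^2 * t * e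
      + u^2 * t^2 * e + 21 * u^2 * s * e + u^2 * s * t + 22 * u^2 * s * t * e
      + u^2 * s * t^2 + 11 * u^2 * s^2 + 11 * u^2 * s^2 * e + u^2 * j * e^2
      + 3 * u^2 * j * s * e + 2 * u^2 * j * s^2 + u^2 * j * s^2 * e + u^3 * e^2
      + 2 * u^3 * s * e + 2 * u^3 * s * t * e + u^3 * s^2 + u^3 * s^2 * e"
  define A1 where "A1 = 20 * j + 4 * j^2 + 8 * j^3 + 25 * u * j + 5 * u * j^2 + 6 * u * j^3
      + 9 * u^2 * j + u^2 * j^2 + u^2 * j^3 + u^3 * j"
  define B1 where "B1 = 60 * j^2 + 59 * u * j^2 + 19 * u^2 * j^2 + 2 * u^3 * j^2"
  define C1 where "C1 = 144 + 144 * j + 168 * u + 168 * u * j + 73 * u^2 + 73 * u^2 * j + 14 * u^3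
      + 14 * u^3 * j + u^4 + u^4 * j"
  define A2 where "A2 = 48 + 8 * j + 8 * j^2 + 40 * u + 6 * u * j + 6 * u * j^2 + 11 * u^2 + u^2 * j
      + u^2 * j^2 + u^3"
  define B2 where "B2 = 48 * j + 52 * u * j + 18 * u^2 * j + 2 * u^3 * j"
  define C2 where "C2 = 144 + 168 * u + 73 * u^2 + 14 * u^3 + u^4"
  have coeffs_nonneg: "0 \<le> R" "0 \<le> A1" "0 \<le> C1" "0 \<le> A2" "0 \<le> C2"
    unfolding R_def A1_def C1_def A2_def C2_def
    using nonneg assms(3) by (intro add_nonneg_nonneg mult_nonneg_nonneg zero_le_power; simp)+
  have "4 * A1 * C1 - B1^2 = 11520 * j + 13824 * j^2 + 6912 * j^3 + 1008 * j^4 + 27840 * u * j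
      + 33408 * u * j^2 + 14400 * u * j^3 + 1752 * u * j^4 + 27824 * u^2 * j
      + 32928 * u^2 * j^2 + 12048 * u^2 * j^3 + 1183 * u^2 * j^4 + 15044 * u^3 * j
      + 17400 * u^3 * j^2 + 5228 * u^3 * j^3 + 390 * u^3 * j^4 + 4780 * u^4 * j
      + 5368 * u^4 * j^2 + 1248 * u^4 * j^3 + 63 * u^4 * j^4 + 896 * u^5 * j
      + 972 * u^5 * j^2 + 156 * u^5 * j^3 + 4 * u^5 * j^4 + 92 * u^6 * j
      + 96 * u^6 * j^2 + 8 * u^6 * j^3 + 4 * u^7 * j + 4 * u^7 * j^2"
    unfolding A1_def B1_def C1_def by algebra
  also have "0 \<le> \<dots>"
    using nonneg by (intro add_nonneg_nonneg mult_nonneg_nonneg zero_le_power; simp)+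
  finally have Q1: "0 \<le> A1 * s^2 - B1 * s * e + C1 * e^2"
    using coeffs_nonneg by (intro quadratic_form_nonneg) auto
  have "4 * A2 * C2 - B2^2 = 27648 + 4608 * j + 2304 * j^2 + 55296 * u + 8832 * u * j + 3840 * u * j^2
      + 47232 * u^2 + 6944 * u^2 * j + 2512 * u^2 * j^2 + 22336 * u^3 + 2872 * u^3 * j
      + 808 * u^3 * j^2 + 6316 * u^4 + 660 * u^4 * j + 128 * u^4 * j^2 + 1068 * u^5
      + 80 * u^5 * j + 8 * u^5 * j^2 + 100 * u^6 + 4 * u^6 * j + 4 * u^7"
    unfolding A2_def B2_def C2_def by algebra
  also have "0 \<le> \<dots>"
    using nonneg by (intro add_nonneg_nonneg mult_nonneg_nonneg zero_le_power; simp)+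
  finally have Q2: "0 \<le> A2 * s^2 - B2 * s * e + C2 * e^2"
    using coeffs_nonneg by (intro quadratic_form_nonneg) auto
  have "(K + 1) * K * X^2 * a + K^2 * (K + 1)^2 * X * a^2 + (K^2 - 1) * B * (B + 1) * X * s^2
      + B * (B + 1) * X * a + K * B * (K + 1) * a^2
      - (2 * K^2 * (K + 1) * B * a * X * s + K * B * (K + 1) * s^2 * a)
    = R + s * (A1 * s^2 - B1 * s * e + C1 * e^2) + t * (A2 * s^2 - B2 * s * e + C2 * e^2)"
    unfolding subst R_def A1_def B1_def C1_def A2_def B2_def C2_def by algebra
  moreover have "0 \<le> R + s * (A1 * s^2 - B1 * s * e + C1 * e^2) + t * (A2 * s^2 - B2 * s * e + C2 * e^2)"
    using coeffs_nonneg Q1 Q2 nonneg assms(3) by simp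
  ultimately show ?thesis
    by linarith
qed

lemma pseudo_power_step_real:
  fixes K B P k0 n0 s a k :: real
  assumes K: "3 \<le> K" "K \<le> B"
    and k0: "B * k0 = K * P" and n0: "(K + 1) * n0 = (B + 1) * P" "0 \<le> n0"
    and s: "0 \<le> s" "s \<le> a" "0 < a" "(B - K + 1) * s \<le> K * P"
    and IH: "(K - 1) * s^2 + a \<le> K * k * a"
  shows "K * (P + s)^2 + (n0 + a) \<le> (K + 1) * (k0 + k) * (n0 + a)"
proof -
  \<comment> \<open>\<open>D \<ge> 0\<close> is the claim multiplied by \<open>K a\<close> with \<open>K k a\<close> bounded by the hypothesis \<open>IH\<close>;
    multiplying once more by \<open>B (K + 1)\<close> eliminates \<open>k0\<close> and \<open>n0\<close> and leaves the certificate.\<close>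
  define D where "D = (K + 1) * (K * k0 * a + (K - 1) * s^2 + a) * (n0 + a) - K * a * (K * (P + s)^2 + n0 + a)"
  have "0 \<le> K * B * (K + 1) * D"
  proof -
    have "K * B * (K + 1) * D =
      (K + 1) * K * (K * P)^2 * a + K^2 * (K + 1)^2 * (K * P) * a^2 + (K^2 - 1) * B * (B + 1) * (K * P) * s^2
      + B * (B + 1) * (K * P) * a + K * B * (K + 1) * a^2
      - (2 * K^2 * (K + 1) * B * a * (K * P) * s + K * B * (K + 1) * s^2 * a)"
      unfolding D_def using k0 n0(1) by algebra
    then show ?thesis
      using pseudo_power_certificate[OF K s(1,2,4)] by simp
  qed
  moreover have "0 < K * B * (K + 1)"
    using K by simp
  ultimately have "0 \<le> D"
    by (simp add: zero_le_mult_iff)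
  have "K * a * (K * (P + s)^2 + n0 + a) \<le> (K + 1) * (K * k0 * a + (K - 1) * s^2 + a) * (n0 + a)"
    using \<open>0 \<le> D\<close> unfolding D_def by simp
  also have "\<dots> \<le> (K + 1) * (K * k0 * a + K * k * a) * (n0 + a)"
    using IH K n0(2) s(3) by (intro mult_right_mono mult_left_mono) auto
  also have "\<dots> = K * a * ((K + 1) * (k0 + k) * (n0 + a))"
    by (simp add: algebra_simps)
  finally have "K * a * (K * (P + s)^2 + n0 + a) \<le> K * a * ((K + 1) * (k0 + k) * (n0 + a))" .
  then show ?thesis
    using K s(3) by (simp add: mult_le_cancel_left_pos add.assoc)
qed

lemma pseudo_power_step:
  fixes K B P k0 n0 p k N :: nat
  assumes K: "3 \<le> K" "K \<le> B"
    and k0: "B * k0 = K * P" and n0: "(K + 1) * n0 = (B + 1) * P"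
    and p: "0 < p" "p \<le> N" "(B + 1 - K) * p \<le> K * P"
    and IH: "(K - 1) * p^2 + N \<le> K * k * N"
  shows "K * (P + p)^2 + (n0 + N) \<le> (K + 1) * (k0 + k) * (n0 + N)"
proof -
  have "real K * (real P + real p)^2 + (real n0 + real N)
    \<le> (real K + 1) * (real k0 + real k) * (real n0 + real N)"
  proof (rule pseudo_power_step_real)
    show "real B * real k0 = real K * real P" "(real K + 1) * real n0 = (real B + 1) * real P"
      using arg_cong[OF k0, of real] arg_cong[OF n0, of real] by (simp_all add: algebra_simps)
    have "real (B + 1 - K) * real p \<le> real K * real P"
      using of_nat_mono[OF p(3)] by (simp only: of_nat_mult)
    moreover have "real (B + 1 - K) = real B - real K + 1"
      using K by (simp add: of_nat_diff)
    ultimately show "(real B - real K + 1) * real p \<le> real K * real P"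
      by (simp only:)
    have "real ((K - 1) * p^2 + N) \<le> real (K * k * N)"
      using IH by (rule of_nat_mono)
    then show "(real K - 1) * (real p)^2 + real N \<le> real K * real k * real N"
      using K by (simp add: of_nat_diff)
  qed (use K p in auto)
  then have "real (K * (P + p)^2 + (n0 + N)) \<le> real ((K + 1) * (k0 + k) * (n0 + N))"
    by (simp only: of_nat_add of_nat_mult of_nat_power of_nat_1)
  then show ?thesis
    by (simp only: of_nat_le_iff)
qed

lemma times_Suc_le_binomial:
  assumes "2 \<le> K" "K \<le> B"
  shows "B * (B + 1) \<le> K * (K + 1) * (B choose K)"
proof -
  have "K * (K - 1) * (B choose K) = B * ((K - 1) * ((B - 1) choose (K - 1)))"
    using assms times_binomial_minus1_eq[of K B] by (simp add: algebra_simps)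
  also have "\<dots> = B * (B - 1) * ((B - 2) choose (K - 2))"
    using assms times_binomial_minus1_eq[of "K - 1" "B - 1"] by (simp add: numeral_2_eq_2)
  also have "\<dots> \<ge> B * (B - 1)"
    using assms by (simp add: Suc_leI)
  finally have "B * (B - 1) \<le> K * (K - 1) * (B choose K)" .
  then have "(K + 1) * (B * (B - 1)) \<le> (K + 1) * (K * (K - 1) * (B choose K))"
    by (rule mult_left_mono) simp
  also have "\<dots> = (K - 1) * (K * (K + 1) * (B choose K))"
    by (simp only: mult_ac)
  finally have "(K + 1) * (B * (B - 1)) \<le> (K - 1) * (K * (K + 1) * (B choose K))" .
  moreover have "(K - 1) * (B * (B + 1)) \<le> (K + 1) * (B * (B - 1))"
  proof -
    have "(K - 1) * (B + 1) \<le> (K + 1) * (B - 1)"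
      using assms by (cases K; cases B) (auto simp: algebra_simps)
    then have "B * ((K - 1) * (B + 1)) \<le> B * ((K + 1) * (B - 1))"
      by (rule mult_left_mono) simp
    then show ?thesis
      by (simp only: mult_ac)
  qed
  ultimately have "(K - 1) * (B * (B + 1)) \<le> (K - 1) * (K * (K + 1) * (B choose K))"
    by linarith
  then show ?thesis
    using assms by simp
qed

lemma binomial_pseudo_power_ineq:
  assumes "2 \<le> K" "K \<le> B"
  shows "K * (B choose K)^2 + (Suc B choose Suc K)
    \<le> (K + 1) * ((B - 1) choose (K - 1)) * (Suc B choose Suc K)"
proof -
  define P k0 n0 where "P = B choose K" and "k0 = (B - 1) choose (K - 1)" and "n0 = Suc B choose Suc K"
  have k0: "B * k0 = K * P"
    unfolding P_def k0_def using assms times_binomial_minus1_eq[of K B] by simp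
  have n0: "(K + 1) * n0 = (B + 1) * P"
    unfolding P_def n0_def using Suc_times_binomial[of K B] by simp
  have "(K + 1) * (B * n0) = B * (B + 1) * P"
    using n0 by (simp add: algebra_simps)
  also have "\<dots> \<le> K * (K + 1) * P * P"
    using times_Suc_le_binomial[OF assms] unfolding P_def[symmetric] by (rule mult_right_mono) simp
  also have "\<dots> = (K + 1) * (K * P * P)"
    by (simp only: mult_ac)
  finally have "B * n0 \<le> K * P * P"
    by (simp only: mult_le_cancel1 Suc_eq_plus1[symmetric])
  then have "B * (K * P^2 + n0) \<le> B * (K * P^2) + K * P * P"
    by (simp add: distrib_left)
  also have "\<dots> = (B + 1) * P * (K * P)"
    by (simp add: algebra_simps power2_eq_square)
  also have "\<dots> = B * ((K + 1) * k0 * n0)"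
    using k0 n0 by (metis mult.assoc mult.commute)
  finally show ?thesis
    unfolding P_def k0_def n0_def using assms by simp
qed

lemma two_term_pseudo_power_ineq:
  assumes "0 < b" "b < B"
  shows "2 * ((B choose 2) + b)^2 + ((Suc B choose 3) + (Suc b choose 2))
    \<le> 3 * B * ((Suc B choose 3) + (Suc b choose 2))"
proof -
  define v w where "v = int b - 1" and "w = int B - int b - 1"
  have vw: "0 \<le> v" "0 \<le> w" "int b = v + 1" "int B = v + w + 2"
    unfolding v_def w_def using assms by auto
  define x y z where "x = int (B choose 2)" and "y = int (Suc B choose 3)" and "z = int (Suc b choose 2)"
  have "2 * (B choose 2) = B * (B - 1)"
    using times_binomial_minus1_eq[of 2 B] by simp
  then have "int (2 * (B choose 2)) = int B * int (B - 1)"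
    by simp
  then have "2 * x = int B * (int B - 1)"
    unfolding x_def using assms by (simp add: of_nat_diff)
  moreover have "3 * (Suc B choose 3) = Suc B * (B choose 2)"
    using Suc_times_binomial[of 2 B] by (simp add: numeral_3_eq_3)
  then have "int (3 * (Suc B choose 3)) = int (Suc B * (B choose 2))"
    by (rule arg_cong)
  then have "3 * y = (1 + int B) * x"
    unfolding x_def y_def by (simp only: of_nat_mult of_nat_Suc of_nat_numeral)
  moreover have "2 * (Suc b choose 2) = Suc b * b"
    using times_binomial_minus1_eq[of 2 "Suc b"] by simp
  then have "int (2 * (Suc b choose 2)) = int (Suc b * b)"
    by (rule arg_cong)
  then have "2 * z = (1 + int b) * int b"
    unfolding z_def by (simp only: of_nat_mult of_nat_Suc of_nat_numeral)
  ultimately have "6 * (3 * int B * (y + z) - (2 * (x + int b)^2 + (y + z)))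
    = 12 + 19 * w + 12 * w^2 + 5 * w^3 + 16 * v + 15 * v * w + 3 * v * w^2 + 6 * v^2 + 2 * v^3"
    unfolding vw(3,4) by algebra
  also have "\<dots> \<ge> 0"
    using vw(1,2) by simp
  finally have "2 * (x + int b)^2 + (y + z) \<le> 3 * int B * (y + z)"
    by simp
  then have "int (2 * ((B choose 2) + b)^2 + ((Suc B choose 3) + (Suc b choose 2)))
    \<le> int (3 * B * ((Suc B choose 3) + (Suc b choose 2)))"
    unfolding x_def y_def z_def by (simp only: of_nat_add of_nat_mult of_nat_power of_nat_numeral)
  then show ?thesis
    by (simp only: of_nat_le_iff)
qed

lemma cascade_tail_bound:
  assumes "cascade K (B # T)"
  shows "(B + 1 - K) * cascade_val (K - 1) T \<le> K * (B choose K)"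
proof (cases T)
  case (Cons b T')
  have "cascade_val (K - 1) T < Suc b choose (K - 1)"
    using cascade_val_Cons_less[of "K - 1" b T'] assms Cons by simp
  also have "\<dots> \<le> B choose (K - 1)"
    using assms Cons by (intro binomial_right_mono) simp
  finally have "(B + 1 - K) * cascade_val (K - 1) T \<le> (B + 1 - K) * (B choose (K - 1))"
    by simp
  also have "\<dots> = B * ((B - 1) choose (K - 1))"
    using assms binomial_absorb_comp[of B "K - 1"] by (simp add: Suc_diff_le)
  also have "\<dots> = K * (B choose K)"
    using assms times_binomial_minus1_eq[of K B] by simp
  finally show ?thesis .
qed simp

lemma cascade_pseudo_power_ineq_Cons:
  assumes "cascade K (B # T)" "T \<noteq> []" "3 \<le> K"
    and IH: "(K - 1) * (cascade_val (K - 1) T)^2 + cascade_val K (map Suc T)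
      \<le> K * cascade_kappa (K - 1) T * cascade_val K (map Suc T)"
  shows "K * (cascade_val K (B # T))^2 + cascade_val (Suc K) (map Suc (B # T))
    \<le> (K + 1) * cascade_kappa K (B # T) * cascade_val (Suc K) (map Suc (B # T))"
proof -
  have "K * ((B choose K) + cascade_val (K - 1) T)^2 + ((Suc B choose Suc K) + cascade_val K (map Suc T))
    \<le> (K + 1) * (((B - 1) choose (K - 1)) + cascade_kappa (K - 1) T)
      * ((Suc B choose Suc K) + cascade_val K (map Suc T))"
  proof (rule pseudo_power_step)
    show "K \<le> B" "B * ((B - 1) choose (K - 1)) = K * (B choose K)"
      using assms(1,3) times_binomial_minus1_eq[of K B] by auto
    show "(K + 1) * (Suc B choose Suc K) = (B + 1) * (B choose K)"
      using Suc_times_binomial[of K B] by simp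
    show "0 < cascade_val (K - 1) T"
      using assms(1,2) by (cases T) auto
    have "Suc (K - 1) = K"
      using assms(3) by simp
    then show "cascade_val (K - 1) T \<le> cascade_val K (map Suc T)"
      using cascade_val_le_map_Suc[of "K - 1" T] assms(1) by simp
  qed (use assms(3) IH cascade_tail_bound[OF assms(1)] in auto)
  then show ?thesis
    by simp
qed

lemma cascade_pseudo_power_ineq:
  "cascade K bs \<Longrightarrow> bs \<noteq> [] \<Longrightarrow> 2 \<le> K \<Longrightarrow>
    K * (cascade_val K bs)^2 + cascade_val (Suc K) (map Suc bs)
      \<le> (K + 1) * cascade_kappa K bs * cascade_val (Suc K) (map Suc bs)"
proof (induction bs arbitrary: K)
  case (Cons B T)
  consider "T = []" | "K = 2" "T \<noteq> []" | "3 \<le> K" "T \<noteq> []"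
    using Cons.prems(3) by linarith
  then show ?case
  proof cases
    case 1
    then show ?thesis
      using binomial_pseudo_power_ineq[of K B] Cons.prems by simp
  next
    case 2
    then obtain b where "T = [b]" "0 < b" "b < B"
      using Cons.prems(1) by (cases T rule: remdups_adj.cases) auto
    then show ?thesis
      using two_term_pseudo_power_ineq[of b B] \<open>K = 2\<close> by (simp add: numeral_2_eq_2 numeral_3_eq_3)
  next
    case 3
    moreover have "Suc (K - 1) = K"
      using 3 by simp
    ultimately show ?thesis
      using Cons.IH[of "K - 1"] Cons.prems(1) by (intro cascade_pseudo_power_ineq_Cons) auto
  qed
qed simp

lemma cascade_pseudo_power_less:
  assumes "cascade K bs" "bs \<noteq> []" "0 < K"
  shows "K * (cascade_val K bs)^2 < (K + 1) * cascade_kappa K bs * (cascade_val (Suc K) (map Suc bs) + 1)"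
proof -
  obtain b bs' where b: "bs = b # bs'"
    using assms(2) by (cases bs) auto
  show ?thesis
  proof (cases "K = 1")
    case True
    then have "bs = [b]"
      using assms(1) b by (cases bs') auto
    moreover have "2 * (Suc b choose 2) = Suc b * b"
      using times_binomial_minus1_eq[of 2 "Suc b"] by simp
    ultimately show ?thesis
      using True by (simp add: numeral_2_eq_2 power2_eq_square algebra_simps)
  next
    case False
    have "0 < cascade_kappa K bs"
      using assms(1) b by (simp add: diff_le_mono)
    moreover have "K * (cascade_val K bs)^2 + cascade_val (Suc K) (map Suc bs)
      \<le> (K + 1) * cascade_kappa K bs * cascade_val (Suc K) (map Suc bs)"
      using cascade_pseudo_power_ineq[OF assms(1,2)] False assms(3) by simp
    ultimately show ?thesis
      by (simp add: algebra_simps)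
  qed
qed

lemma macaulay_step:
  assumes "2 \<le> k" "0 < p" "0 < m" "kappa (k - 1) p \<le> q" "k * q * m \<le> (k - 1) * p^2"
  shows "kappa k m \<le> p"
proof -
  obtain K where k: "k = Suc K" and "0 < K"
    using assms(1) by (cases k) auto
  obtain bs where bs: "bs \<noteq> []" "cascade K bs" "cascade_val K bs = p"
    using cascade_exists \<open>0 < K\<close> assms(2) by blast
  define N where "N = cascade_val k (map Suc bs)"
  have "kappa k N = p"
    unfolding N_def k using kappa_cascade_val cascade_map_Suc cascade_kappa_map_Suc bs by simp
  have "m \<le> N"
  proof (rule ccontr)
    assume "\<not> m \<le> N"
    have "K * p^2 < k * cascade_kappa K bs * (N + 1)"
      using cascade_pseudo_power_less[OF bs(2,1) \<open>0 < K\<close>] bs(3) unfolding N_def k by simp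
    also have "\<dots> \<le> k * q * m"
      using assms(4) kappa_cascade_val[OF bs(2,1)] bs(3) \<open>\<not> m \<le> N\<close> k by (intro mult_mono) auto
    finally show False
      using assms(5) k by simp
  qed
  then show ?thesis
    using kappa_mono[of k m N] \<open>kappa k N = p\<close> assms(1,3) by simp
qed

lemma macaulay_of_newton:
  fixes a :: "nat \<Rightarrow> nat"
  assumes "a 0 = 1" "\<forall>k\<le>d. 0 < a k"
    and newton: "\<forall>j. j + 2 \<le> d \<longrightarrow> (j + 2) * a j * a (j + 2) \<le> (j + 1) * (a (j + 1))^2"
  shows "\<forall>i<d. kappa (i + 1) (a (i + 1)) \<le> a i"
proof (intro allI impI)
  fix i assume "i < d"
  then show "kappa (i + 1) (a (i + 1)) \<le> a i"
  proof (induction i)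
    case 0
    then show ?case
      using kappa_1 assms(1,2) by simp
  next
    case (Suc n)
    have "kappa (n + 2) (a (n + 2)) \<le> a (n + 1)"
    proof (rule macaulay_step)
      show "0 < a (n + 1)" "0 < a (n + 2)"
        using Suc.prems assms(2) by auto
      show "kappa (n + 2 - 1) (a (n + 1)) \<le> a n"
        using Suc by simp
      show "(n + 2) * a n * a (n + 2) \<le> (n + 2 - 1) * (a (n + 1))^2"
        using newton Suc.prems by simp
    qed simp
    then show ?case
      by (simp add: numeral_2_eq_2)
  qed
qed

section \<open>Coefficients of real-rooted polynomials\<close>

definition newton_seq :: "(nat \<Rightarrow> real) \<Rightarrow> bool" where
  "newton_seq c \<longleftrightarrow> (\<forall>k. 0 \<le> c k) \<and> (\<forall>k. c k = 0 \<longrightarrow> c (Suc k) = 0) \<and>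
     (\<forall>j. real (j + 2) * c j * c (j + 2) \<le> real (j + 1) * (c (j + 1))^2)"

lemma newton_seqD:
  assumes "newton_seq c"
  shows "0 \<le> c k" "c k = 0 \<Longrightarrow> c (Suc k) = 0"
    "real (j + 2) * c j * c (j + 2) \<le> real (j + 1) * (c (j + 1))^2"
  using assms unfolding newton_seq_def by auto

lemma newton_seq_weaken:
  assumes "newton_seq c"
  shows "real (j + 3) * c j * c (j + 2) \<le> real (j + 2) * (c (j + 1))^2"
proof -
  have "real (j + 2) * (real (j + 3) * c j * c (j + 2)) = real (j + 3) * (real (j + 2) * c j * c (j + 2))"
    by simp
  also have "\<dots> \<le> real (j + 3) * (real (j + 1) * (c (j + 1))^2)"
    using newton_seqD(3)[OF assms] by (intro mult_left_mono) auto
  also have "\<dots> = (real (j + 3) * real (j + 1)) * (c (j + 1))^2"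
    by simp
  also have "\<dots> \<le> (real (j + 2) * real (j + 2)) * (c (j + 1))^2"
    by (intro mult_right_mono) (simp_all add: algebra_simps)
  also have "\<dots> = real (j + 2) * (real (j + 2) * (c (j + 1))^2)"
    by simp
  finally show ?thesis
    by (simp add: mult_le_cancel_left_pos)
qed

lemma newton_seq_cross:
  assumes "newton_seq c"
  shows "real (j + 3) * c j * c (j + 3) \<le> real (j + 1) * c (j + 1) * c (j + 2)"
proof (cases "c (j + 1) = 0 \<or> c (j + 2) = 0")
  case True
  then have "c (j + 3) = 0"
    using newton_seqD(2)[OF assms] by (auto simp: numeral_3_eq_3)
  then show ?thesis
    using newton_seqD(1)[OF assms] by simp
next
  case False
  then have pos: "0 < c (j + 1)" "0 < c (j + 2)"
    using newton_seqD(1)[OF assms] by (auto simp: order_le_less)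
  have next_newton: "real (j + 3) * c (j + 1) * c (j + 3) \<le> real (j + 2) * (c (j + 2))^2"
    using newton_seqD(3)[OF assms, of "j + 1"] by (simp add: add.assoc numeral_3_eq_3)
  have "(real (j + 2) * c j * c (j + 2)) * (real (j + 3) * c (j + 1) * c (j + 3))
    \<le> (real (j + 1) * (c (j + 1))^2) * (real (j + 2) * (c (j + 2))^2)"
    by (rule mult_mono[OF newton_seqD(3)[OF assms, of j] next_newton]) (use newton_seqD(1)[OF assms] in auto)
  then have "(real (j + 2) * c (j + 1) * c (j + 2)) * (real (j + 3) * c j * c (j + 3))
    \<le> (real (j + 2) * c (j + 1) * c (j + 2)) * (real (j + 1) * c (j + 1) * c (j + 2))"
    by (simp add: algebra_simps power2_eq_square)
  then show ?thesis
    using pos by (simp add: mult_le_cancel_left_pos)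
qed

lemma coeff_linear_mult:
  fixes \<rho> :: "'a :: comm_semiring_1"
  shows "coeff ([:\<rho>, 1:] * q) k = \<rho> * coeff q k + (if k = 0 then 0 else coeff q (k - 1))"
  by (cases k) auto

lemma newton_ineq_mult_linear:
  fixes \<rho> d c0 c1 c2 :: real
  assumes "0 \<le> \<rho>" "real (j + 2) * c0 * c2 \<le> real (j + 1) * c1^2"
    and "real (j + 2) * d * c2 \<le> real j * c1 * c0" "real (j + 2) * d * c1 \<le> real (j + 1) * c0^2"
  shows "real (j + 2) * (\<rho> * c0 + d) * (\<rho> * c2 + c1) \<le> real (j + 1) * (\<rho> * c1 + c0)^2"
proof -
  have "real (j + 1) * (\<rho> * c1 + c0)^2 - real (j + 2) * (\<rho> * c0 + d) * (\<rho> * c2 + c1)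
    = \<rho>^2 * (real (j + 1) * c1^2 - real (j + 2) * c0 * c2)
      + \<rho> * (real j * c1 * c0 - real (j + 2) * d * c2)
      + (real (j + 1) * c0^2 - real (j + 2) * d * c1)"
    by (simp add: algebra_simps power2_eq_square)
  also have "\<dots> \<ge> 0"
    using assms by (intro add_nonneg_nonneg mult_nonneg_nonneg) auto
  finally show ?thesis
    by simp
qed

lemma newton_seq_mult_linear:
  assumes "newton_seq (coeff q)" "0 < \<rho>"
  shows "newton_seq (coeff ([:\<rho>, 1:] * q))"
proof -
  define c where "c = coeff q"
  note c = newton_seqD[OF assms(1)[folded c_def]]
  have c': "coeff ([:\<rho>, 1:] * q) k = \<rho> * c k + (if k = 0 then 0 else c (k - 1))" for k
    unfolding c_def by (rule coeff_linear_mult)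
  have "0 \<le> coeff ([:\<rho>, 1:] * q) k" for k
    unfolding c' using c(1) assms(2) by simp
  moreover have "coeff ([:\<rho>, 1:] * q) (Suc k) = 0" if "coeff ([:\<rho>, 1:] * q) k = 0" for k
  proof -
    have "0 \<le> \<rho> * c k" "0 \<le> (if k = 0 then 0 else c (k - 1))"
      using c(1) assms(2) by auto
    then have "\<rho> * c k = 0"
      using that unfolding c' by linarith
    then have "c k = 0" "c (Suc k) = 0"
      using assms(2) c(2) by auto
    then show ?thesis
      unfolding c' by simp
  qed
  moreover have "real (j + 2) * coeff ([:\<rho>, 1:] * q) j * coeff ([:\<rho>, 1:] * q) (j + 2)
    \<le> real (j + 1) * (coeff ([:\<rho>, 1:] * q) (j + 1))^2" for j
  proof (cases j)
    case 0
    then show ?thesis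
      using newton_ineq_mult_linear[of \<rho> 0 "c 0" "c 2" "c 1" 0] c(3)[of 0] assms(2)
      unfolding c' by (simp add: numeral_2_eq_2)
  next
    case (Suc i)
    then show ?thesis
      using newton_ineq_mult_linear[of \<rho> j "c j" "c (j + 2)" "c (j + 1)" "c i"] c(3)[of j] assms(2)
        newton_seq_cross[OF assms(1)[folded c_def], of i] newton_seq_weaken[OF assms(1)[folded c_def], of i]
      unfolding c' by (simp add: numeral_3_eq_3 algebra_simps)
  qed
  ultimately show ?thesis
    unfolding newton_seq_def by blast
qed

lemma newton_seq_prod_linear:
  "\<forall>\<rho>\<in>set rs. 0 < \<rho> \<Longrightarrow> newton_seq (coeff (\<Prod>\<rho>\<leftarrow>rs. [:\<rho>, 1:]))"
proof (induction rs)
  case Nil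
  then show ?case
    unfolding newton_seq_def by (auto simp: coeff_1 numeral_2_eq_2)
next
  case (Cons \<rho> rs)
  then have "newton_seq (coeff ([:\<rho>, 1:] * (\<Prod>\<rho>\<leftarrow>rs. [:\<rho>, 1:])))"
    by (intro newton_seq_mult_linear) auto
  then show ?case
    by (simp only: list.map prod_list.Cons)
qed

lemma map_poly_of_real_mult:
  "map_poly (of_real :: real \<Rightarrow> complex) (p * q) = map_poly of_real p * map_poly of_real q"
  by (intro poly_eqI) (simp add: coeff_map_poly coeff_mult of_real_sum)

lemma poly_map_poly_of_real:
  "poly (map_poly (of_real :: real \<Rightarrow> complex) p) (of_real x) = of_real (poly p x)"
  by (induction p) (auto simp: map_poly_pCons)

lemma real_rooted_poly_factor:
  fixes p :: "real poly"
  assumes "p \<noteq> 0" "\<forall>z. poly (map_poly complex_of_real p) z = 0 \<longrightarrow> z \<in> \<real>"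
  obtains c rs where "p = smult c (\<Prod>r\<leftarrow>rs. [:-r, 1:])"
  using assms
proof (induction "degree p" arbitrary: p thesis)
  case 0
  then obtain a where "p = [:a:]"
    by (metis degree_eq_zeroE)
  then show ?case
    using 0 by (intro "0.prems"(1)[of a "[]"]) simp
next
  case (Suc n)
  have "degree (map_poly complex_of_real p) = Suc n"
    using Suc.hyps(2) by (simp add: degree_map_poly)
  then obtain z where "poly (map_poly complex_of_real p) z = 0"
    using fundamental_theorem_of_algebra constant_degree by (metis nat.simps(3))
  moreover from this obtain r where "z = complex_of_real r"
    using Suc.prems(3) Reals_cases by blast
  ultimately have "poly p r = 0"
    using poly_map_poly_of_real[of p r] by simp
  then obtain q where q: "p = [:-r, 1:] * q"
    using poly_eq_0_iff_dvd by (metis dvdE)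
  with Suc.prems(2) have "q \<noteq> 0"
    by auto
  have "degree p = degree [:-r, 1:] + degree q"
    unfolding q by (rule degree_mult_eq) (use \<open>q \<noteq> 0\<close> in simp_all)
  then have "degree q = n"
    using Suc.hyps(2) by simp
  moreover have "\<forall>w. poly (map_poly complex_of_real q) w = 0 \<longrightarrow> w \<in> \<real>"
    using Suc.prems(3) unfolding q map_poly_of_real_mult by simp
  ultimately obtain c rs where "q = smult c (\<Prod>r\<leftarrow>rs. [:-r, 1:])"
    using \<open>q \<noteq> 0\<close> by (elim Suc.hyps(1)[of q, rotated]) auto
  then show ?case
    using q by (intro Suc.prems(1)[of c "r # rs"]) (simp add: mult_smult_right)
qed

lemma newton_ineq_real_rooted:
  fixes p :: "real poly"
  assumes "p \<noteq> 0" "\<forall>z. poly (map_poly complex_of_real p) z = 0 \<longrightarrow> z \<in> \<real>"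
    and "\<forall>x\<ge>0. poly p x \<noteq> 0"
  shows "real (j + 2) * coeff p j * coeff p (j + 2) \<le> real (j + 1) * (coeff p (j + 1))^2"
proof -
  obtain c rs where p: "p = smult c (\<Prod>r\<leftarrow>rs. [:-r, 1:])"
    using real_rooted_poly_factor assms(1,2) by blast
  define Q where "Q = (\<Prod>r\<leftarrow>rs. [:-r, 1:])"
  have "r < 0" if "r \<in> set rs" for r
  proof -
    have "poly p r = 0"
      unfolding p using that by (induction rs) auto
    then show ?thesis
      using assms(3) not_less by blast
  qed
  then have "newton_seq (coeff (\<Prod>\<rho>\<leftarrow>map uminus rs. [:\<rho>, 1:]))"
    by (intro newton_seq_prod_linear) auto
  then have "real (j + 2) * coeff Q j * coeff Q (j + 2) \<le> real (j + 1) * (coeff Q (j + 1))^2"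
    unfolding Q_def by (simp add: newton_seq_def comp_def)
  then have "c^2 * (real (j + 2) * coeff Q j * coeff Q (j + 2)) \<le> c^2 * (real (j + 1) * (coeff Q (j + 1))^2)"
    by (rule mult_left_mono) simp
  then show ?thesis
    unfolding p Q_def[symmetric] by (simp add: algebra_simps power2_eq_square)
qed

definition fvec :: "(nat \<Rightarrow> nat) \<Rightarrow> nat \<Rightarrow> nat" where
  "fvec f i = (if i = 0 then 1 else f (i - 1))"

lemma coeff_fpoly: "i \<le> d \<Longrightarrow> coeff (fpoly d f) i = real (fvec f i)"
  unfolding fpoly_def fvec_def by (cases i) (auto simp: coeff_sum sum.delta' coeff_monom)

lemma poly_fpoly_pos: "0 \<le> x \<Longrightarrow> 0 < poly (fpoly d f) x"
  unfolding fpoly_def by (simp add: poly_sum poly_monom add_pos_nonneg sum_nonneg)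

lemma fvec_newton_ineq:
  assumes "\<forall>z. poly (map_poly complex_of_real (fpoly d f)) z = 0 \<longrightarrow> z \<in> \<real>" "j + 2 \<le> d"
  shows "(j + 2) * fvec f j * fvec f (j + 2) \<le> (j + 1) * (fvec f (j + 1))^2"
proof -
  have "fpoly d f \<noteq> 0"
    using coeff_fpoly[of 0 d f] by (auto simp: fvec_def)
  then have "real (j + 2) * coeff (fpoly d f) j * coeff (fpoly d f) (j + 2)
    \<le> real (j + 1) * (coeff (fpoly d f) (j + 1))^2"
    using assms(1) poly_fpoly_pos[of _ d f] by (intro newton_ineq_real_rooted) (auto simp: less_imp_neq[symmetric])
  then have "real ((j + 2) * fvec f j * fvec f (j + 2)) \<le> real ((j + 1) * (fvec f (j + 1))^2)"
    using assms(2) by (simp only: coeff_fpoly of_nat_mult of_nat_power)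
  then show ?thesis
    by (simp only: of_nat_le_iff)
qed

theorem corollary3p2:
  fixes d :: nat and f :: "nat \<Rightarrow> nat"
  assumes pos: "\<forall>i<d. f i > 0"
    and real_roots: "\<forall>z::complex. poly (map_poly complex_of_real (fpoly d f)) z = 0 \<longrightarrow> z \<in> \<real>"
  shows "\<forall>i<d. kappa (i + 1) (f i) \<le> (if i = 0 then 1 else f (i - 1))"
proof -
  have "fvec f 0 = 1" "\<forall>k\<le>d. 0 < fvec f k"
    using pos by (auto simp: fvec_def)
  moreover have "\<forall>j. j + 2 \<le> d \<longrightarrow> (j + 2) * fvec f j * fvec f (j + 2) \<le> (j + 1) * (fvec f (j + 1))^2"
    using fvec_newton_ineq[OF real_roots] by blast
  ultimately have "\<forall>i<d. kappa (i + 1) (fvec f (i + 1)) \<le> fvec f i"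
    by (rule macaulay_of_newton)
  then show ?thesis
    by (simp add: fvec_def)
qed

end
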